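(* Every signed digraph $G$ on $[n]$ admits a nilpotent function $f:\{0,1,2,3\}^n\to\{0,1,2,3\}^n$ of class at most $2$.
   Context: A signed digraph is a digraph (loops allowed, no multiple arcs) in which each arc is labeled positive, negative, or null (unsigned). For a finite interval of integers $A$, a function over $A$ is a map $f:A^n\to A^n$; $f^0=\mathrm{id}$, $f^k=f\circ f^{k-1}$. The interaction graph $G(f)$ is the signed digraph on $[n]$ with an arc $(j,i)$ iff $f_i(a)\neq f_i(b)$ for some $a,b\in A^n$ with $a_j<b_j$ and $a_\ell=b_\ell$ for $\ell\neq j$; the arc is positive if $f_i(a)\leq f_i(b)$ for all such pairs, negative if $f_i(a)\geq f_i(b)$ for all such pairs, and null otherwise. $G$ admits $f$ if $G(f)=G$. $f$ is nilpotent if $f^k$ is constant for some $k\geq 0$; the least such $k$ is its class. *)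

theory Defs
  imports Main
begin

datatype sign = Pos | Neg | Null

text \<open>A signed digraph on the vertex set [n] = {0..<n}: G j i = Some s iff there is an arc
  (j,i) with label s (loops allowed, at most one arc per ordered pair).\<close>
type_synonym sdigraph = "nat \<Rightarrow> nat \<Rightarrow> sign option"

definition signed_digraph :: "nat \<Rightarrow> sdigraph \<Rightarrow> bool" where
  "signed_digraph n G \<longleftrightarrow> (\<forall>j i. (j \<ge> n \<or> i \<ge> n) \<longrightarrow> G j i = None)"

text \<open>Configurations A^n for the interval A = {0..q}, as functions on [n] (zero outside).\<close>
definition conf :: "nat \<Rightarrow> nat \<Rightarrow> (nat \<Rightarrow> nat) set" where
  "conf q n = {x. (\<forall>i<n. x i \<le> q) \<and> (\<forall>i\<ge>n. x i = 0)}"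

definition is_fun :: "nat \<Rightarrow> nat \<Rightarrow> ((nat \<Rightarrow> nat) \<Rightarrow> (nat \<Rightarrow> nat)) \<Rightarrow> bool" where
  "is_fun q n f \<longleftrightarrow> (\<forall>x \<in> conf q n. f x \<in> conf q n)"

definition jpairs :: "nat \<Rightarrow> nat \<Rightarrow> nat \<Rightarrow> ((nat \<Rightarrow> nat) \<times> (nat \<Rightarrow> nat)) set" where
  "jpairs q n j = {(a, b). a \<in> conf q n \<and> b \<in> conf q n \<and> a j < b j \<and> (\<forall>l. l \<noteq> j \<longrightarrow> a l = b l)}"

definition interaction_graph :: "nat \<Rightarrow> nat \<Rightarrow> ((nat \<Rightarrow> nat) \<Rightarrow> (nat \<Rightarrow> nat)) \<Rightarrow> sdigraph" where
  "interaction_graph q n f j i =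
     (if j < n \<and> i < n \<and> (\<exists>(a, b) \<in> jpairs q n j. f a i \<noteq> f b i) then
        (if (\<forall>(a, b) \<in> jpairs q n j. f a i \<le> f b i) then Some Pos
         else if (\<forall>(a, b) \<in> jpairs q n j. f a i \<ge> f b i) then Some Neg
         else Some Null)
      else None)"

definition iter_const :: "nat \<Rightarrow> nat \<Rightarrow> ((nat \<Rightarrow> nat) \<Rightarrow> (nat \<Rightarrow> nat)) \<Rightarrow> nat \<Rightarrow> bool" where
  "iter_const q n f k \<longleftrightarrow> (\<forall>x \<in> conf q n. \<forall>y \<in> conf q n. (f ^^ k) x = (f ^^ k) y)"

definition nilpotent :: "nat \<Rightarrow> nat \<Rightarrow> ((nat \<Rightarrow> nat) \<Rightarrow> (nat \<Rightarrow> nat)) \<Rightarrow> bool" where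
  "nilpotent q n f \<longleftrightarrow> (\<exists>k. iter_const q n f k)"

definition nil_class :: "nat \<Rightarrow> nat \<Rightarrow> ((nat \<Rightarrow> nat) \<Rightarrow> (nat \<Rightarrow> nat)) \<Rightarrow> nat" where
  "nil_class q n f = (LEAST k. iter_const q n f k)"

end

theory Submission
  imports Defs
begin

text \<open>Let f_i(x) = 2 if some arc (j,i) is triggered by x_j, and f_i(x) = 1 otherwise, where a positive
  arc is triggered by the top value 3, a negative arc by the bottom value 0, and a null arc by both.
  Triggering a positive arc is monotone in x_j and triggering a negative one antitone, while a null
  arc is switched on, off and on again along 0 < 1 < 3; so G(f) = G. Since f only takes the
  values 1 and 2, no arc is triggered by f(x), hence f(f(x)) is the constant configuration 1.\<close>

fun triggers :: "sign \<Rightarrow> nat \<Rightarrow> bool" where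
  "triggers Pos v \<longleftrightarrow> v = 3"
| "triggers Neg v \<longleftrightarrow> v = 0"
| "triggers Null v \<longleftrightarrow> v = 0 \<or> v = 3"

definition activated :: "sdigraph \<Rightarrow> (nat \<Rightarrow> nat) \<Rightarrow> nat \<Rightarrow> bool" where
  "activated G x i \<longleftrightarrow> (\<exists>l s. G l i = Some s \<and> triggers s (x l))"

definition trigger_fun :: "nat \<Rightarrow> sdigraph \<Rightarrow> (nat \<Rightarrow> nat) \<Rightarrow> (nat \<Rightarrow> nat)" where
  "trigger_fun n G x = (\<lambda>i. if i < n then if activated G x i then 2 else 1 else 0)"

definition const_one :: "nat \<Rightarrow> nat \<Rightarrow> nat" where
  "const_one n = (\<lambda>l. if l < n then 1 else 0)"

lemma interaction_graph_None:
  assumes "\<forall>(a, b) \<in> jpairs q n j. f a i = f b i"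
  shows "interaction_graph q n f j i = None"
  using assms by (auto simp: interaction_graph_def)

lemma interaction_graph_Pos:
  assumes "j < n" "i < n" "\<forall>(a, b) \<in> jpairs q n j. f a i \<le> f b i"
    and "(a, b) \<in> jpairs q n j" "f a i < f b i"
  shows "interaction_graph q n f j i = Some Pos"
  using assms by (force simp: interaction_graph_def)

lemma interaction_graph_Neg:
  assumes "j < n" "i < n" "\<forall>(a, b) \<in> jpairs q n j. f a i \<ge> f b i"
    and "(a, b) \<in> jpairs q n j" "f a i > f b i"
  shows "interaction_graph q n f j i = Some Neg"
proof -
  have "\<exists>(a, b) \<in> jpairs q n j. f a i \<noteq> f b i"
    by (rule bexI[OF _ assms(4)]) (use assms(5) in simp)
  moreover have "\<not> (\<forall>(a, b) \<in> jpairs q n j. f a i \<le> f b i)"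
    using assms(4,5) by fastforce
  ultimately show ?thesis
    using assms(1-3) by (simp add: interaction_graph_def)
qed

lemma interaction_graph_Null:
  assumes "j < n" "i < n"
    and "(a, b) \<in> jpairs q n j" "f a i > f b i"
    and "(c, d) \<in> jpairs q n j" "f c i < f d i"
  shows "interaction_graph q n f j i = Some Null"
proof -
  have "\<exists>(a, b) \<in> jpairs q n j. f a i \<noteq> f b i"
    by (rule bexI[OF _ assms(3)]) (use assms(4) in simp)
  moreover have "\<not> (\<forall>(a, b) \<in> jpairs q n j. f a i \<le> f b i)"
    using assms(3,4) by fastforce
  moreover have "\<not> (\<forall>(a, b) \<in> jpairs q n j. f a i \<ge> f b i)"
    using assms(5,6) by fastforce
  ultimately show ?thesis
    using assms(1,2) by (simp add: interaction_graph_def)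
qed

lemma iter_const_imp_nil_class_le:
  assumes "iter_const q n f k"
  shows "nilpotent q n f \<and> nil_class q n f \<le> k"
  using assms by (auto simp: nilpotent_def nil_class_def intro: Least_le)

lemma conf_le: "x \<in> conf q n \<Longrightarrow> x j \<le> q"
  by (cases "j < n") (auto simp: conf_def)

lemma signed_digraph_arc_bounds:
  assumes "signed_digraph n G" "G j i = Some s"
  shows "j < n" "i < n"
  using assms by (auto simp: signed_digraph_def not_le[symmetric])

lemma triggers_extreme: "triggers s v \<Longrightarrow> v = 0 \<or> v = 3"
  by (cases s) auto

lemma activated_mono:
  assumes "\<forall>l. l \<noteq> j \<longrightarrow> a l = b l"
    and "\<forall>s. G j i = Some s \<longrightarrow> triggers s (a j) \<longrightarrow> triggers s (b j)"
    and "activated G a i"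
  shows "activated G b i"
proof -
  obtain l s where "G l i = Some s" "triggers s (a l)"
    using assms(3) unfolding activated_def by blast
  then have "triggers s (b l)"
    using assms(1,2) by (cases "l = j") auto
  then show ?thesis
    using \<open>G l i = Some s\<close> unfolding activated_def by blast
qed

lemma activated_const_one_upd:
  assumes "signed_digraph n G" "G j i = Some s"
  shows "activated G ((const_one n)(j := v)) i \<longleftrightarrow> triggers s v"
proof -
  have "\<not> triggers t (const_one n l)" if "G l i = Some t" for l t
  proof -
    have "const_one n l = 1"
      using signed_digraph_arc_bounds(1)[OF assms(1) that] by (simp add: const_one_def)
    then show ?thesis
      using triggers_extreme by fastforce
  qed
  then show ?thesis
    using assms(2) unfolding activated_def by (auto split: if_splits)
qed

lemma const_one_upd_jpairs:
  assumes "j < n" "v < w" "w \<le> 3"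
  shows "((const_one n)(j := v), (const_one n)(j := w)) \<in> jpairs 3 n j"
  using assms by (auto simp: jpairs_def conf_def const_one_def)

lemma trigger_fun_is_fun: "is_fun 3 n (trigger_fun n G)"
  by (auto simp: is_fun_def conf_def trigger_fun_def)

lemma interaction_graph_trigger_fun:
  assumes G: "signed_digraph n G"
  shows "interaction_graph 3 n (trigger_fun n G) = G"
proof (intro ext)
  fix j i
  let ?f = "trigger_fun n G" and ?e = "\<lambda>v. (const_one n)(j := v)"
  have mono: "?f a i \<le> ?f b i"
    if "\<forall>l. l \<noteq> j \<longrightarrow> a l = b l"
      and "\<forall>s. G j i = Some s \<longrightarrow> triggers s (a j) \<longrightarrow> triggers s (b j)" for a b
    using activated_mono[of j a b G i] that by (simp add: trigger_fun_def)
  have pair: "\<forall>l. l \<noteq> j \<longrightarrow> a l = b l" "a j < b j" "b j \<le> 3"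
    if "(a, b) \<in> jpairs 3 n j" for a b
    using that conf_le by (auto simp: jpairs_def)
  show "interaction_graph 3 n ?f j i = G j i"
  proof (cases "G j i")
    case None
    have "?f a i = ?f b i" if "(a, b) \<in> jpairs 3 n j" for a b
    proof (rule order.antisym)
      show "?f a i \<le> ?f b i" "?f b i \<le> ?f a i"
        using pair(1)[OF that] None by (auto intro!: mono)
    qed
    then show ?thesis
      using None by (auto intro: interaction_graph_None)
  next
    case (Some s)
    note jn = signed_digraph_arc_bounds(1)[OF G Some]
      and iN = signed_digraph_arc_bounds(2)[OF G Some]
    have line: "?f (?e v) i = (if triggers s v then 2 else 1)" for v
      using activated_const_one_upd[OF G Some] iN by (simp add: trigger_fun_def)
    note e01 = const_one_upd_jpairs[OF jn, of 0 1]
      and e03 = const_one_upd_jpairs[OF jn, of 0 3]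
      and e13 = const_one_upd_jpairs[OF jn, of 1 3]
    show ?thesis
    proof (cases s)
      case Pos
      have "\<forall>(a, b) \<in> jpairs 3 n j. ?f a i \<le> ?f b i"
      proof clarify
        fix a b
        assume ab: "(a, b) \<in> jpairs 3 n j"
        have "\<not> triggers Pos (a j)"
          using pair(2,3)[OF ab] by simp
        then show "?f a i \<le> ?f b i"
          using pair(1)[OF ab] Some Pos by (intro mono) auto
      qed
      then show ?thesis
        using interaction_graph_Pos[OF jn iN _ e03] line Some Pos by simp
    next
      case Neg
      have "\<forall>(a, b) \<in> jpairs 3 n j. ?f a i \<ge> ?f b i"
      proof clarify
        fix a b
        assume ab: "(a, b) \<in> jpairs 3 n j"
        have "\<not> triggers Neg (b j)"
          using pair(2)[OF ab] by simp
        then show "?f b i \<le> ?f a i"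
          using pair(1)[OF ab] Some Neg by (intro mono) auto
      qed
      then show ?thesis
        using interaction_graph_Neg[OF jn iN _ e03] line Some Neg by simp
    next
      case Null
      then show ?thesis
        using interaction_graph_Null[OF jn iN e01 _ e13] line Some by simp
    qed
  qed
qed

lemma trigger_fun_twice:
  assumes "signed_digraph n G"
  shows "trigger_fun n G (trigger_fun n G x) = const_one n"
proof -
  have "\<not> triggers t (trigger_fun n G x l)" if "G l i = Some t" for l i t
  proof -
    have "trigger_fun n G x l \<in> {1, 2}"
      using signed_digraph_arc_bounds(1)[OF assms that] by (simp add: trigger_fun_def)
    then show ?thesis
      using triggers_extreme by fastforce
  qed
  then have "\<not> activated G (trigger_fun n G x) i" for i
    unfolding activated_def by blast
  then show ?thesis
    by (auto simp: trigger_fun_def const_one_def)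
qed

theorem proposition4:
  fixes n :: nat and G :: sdigraph
  assumes "signed_digraph n G"
  shows "\<exists>f. is_fun 3 n f \<and> interaction_graph 3 n f = G \<and>
             nilpotent 3 n f \<and> nil_class 3 n f \<le> 2"
proof -
  have "iter_const 3 n (trigger_fun n G) 2"
    by (simp add: iter_const_def numeral_2_eq_2 trigger_fun_twice[OF assms])
  then show ?thesis
    using trigger_fun_is_fun interaction_graph_trigger_fun[OF assms]
      iter_const_imp_nil_class_le by blast
qed

end
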